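(* Let $\mathcal X=\{x_{n,k}\}$ be a Marcinkiewicz–Zygmund family on $\mathbb T$ with weights $\tau=\{\tau_{n,k}\}$ and constants $A,B>0$ (as in the context). Let $f\in C(\mathbb T)$, $n\in\mathbb N$, let $P_nf=\sum_{|k|\le n}\hat f(k)e^{2\pi ikx}$ be the orthogonal projection of $f$ onto $\mathcal T_n$, and let $p_n=\operatorname{argmin}_{p\in\mathcal T_n}\sum_{k=1}^{L_n}|f(x_{n,k})-p(x_{n,k})|^2\tau_{n,k}$. Then $$\|P_nf-p_n\|_2^2\le A^{-2}B\sum_{k=1}^{L_n}|f(x_{n,k})-P_nf(x_{n,k})|^2\tau_{n,k}.$$
   Context: $\mathbb T=\mathbb R/\mathbb Z$, identified with $(-1/2,1/2]$, with Lebesgue measure; $\|\cdot\|_2$ is the $L^2(\mathbb T)$-norm. $\mathcal T_n$ is the space of trigonometric polynomials $\sum_{k=-n}^n c_ke^{2\pi ikx}$; $\hat f(k)=\int_0^1 f(x)e^{-2\pi ikx}dx$. A doubly-indexed set $\mathcal X=\{x_{n,k}: n\in\mathbb N, k=1,\dots,L_n\}\subseteq\mathbb T$ with weights $\tau_{n,k}>0$ is a Marcinkiewicz–Zygmund family if there are constants $A,B>0$ independent of $n$ with $A\|p\|_2^2\le\sum_{k=1}^{L_n}|p(x_{n,k})|^2\tau_{n,k}\le B\|p\|_2^2$ for all $p\in\mathcal T_n$, $n\in\mathbb N$. *)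

theory Defs
  imports "HOL-Analysis.Analysis"
begin

text \<open>Functions on the torus are modelled as 1-periodic functions real => complex.\<close>

definition trig_poly :: "nat \<Rightarrow> (real \<Rightarrow> complex) \<Rightarrow> bool" where
  "trig_poly n p \<longleftrightarrow> (\<exists>c :: int \<Rightarrow> complex.
     p = (\<lambda>x. \<Sum>k\<in>{-int n..int n}. c k * exp (2 * of_real pi * \<i> * of_int k * of_real x)))"

definition fourier_coeff :: "(real \<Rightarrow> complex) \<Rightarrow> int \<Rightarrow> complex" where
  "fourier_coeff f k = integral {0..1} (\<lambda>x. f x * exp (- (2 * of_real pi * \<i> * of_int k * of_real x)))"

definition fourier_proj :: "nat \<Rightarrow> (real \<Rightarrow> complex) \<Rightarrow> real \<Rightarrow> complex" where
  "fourier_proj n f = (\<lambda>x. \<Sum>k\<in>{-int n..int n}. fourier_coeff f k * exp (2 * of_real pi * \<i> * of_int k * of_real x))"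

definition l2_norm_sq :: "(real \<Rightarrow> complex) \<Rightarrow> real" where
  "l2_norm_sq g = integral {0..1} (\<lambda>x. (cmod (g x))\<^sup>2)"

definition MZ_family :: "(nat \<Rightarrow> nat \<Rightarrow> real) \<Rightarrow> (nat \<Rightarrow> nat \<Rightarrow> real) \<Rightarrow> (nat \<Rightarrow> nat)
    \<Rightarrow> real \<Rightarrow> real \<Rightarrow> bool" where
  "MZ_family X \<tau> L A B \<longleftrightarrow> A > 0 \<and> B > 0 \<and>
     (\<forall>n\<ge>1. \<forall>k\<in>{1..L n}. \<tau> n k > 0 \<and> X n k \<in> {-1/2<..1/2}) \<and>
     (\<forall>n\<ge>1. \<forall>p. trig_poly n p \<longrightarrow>
        A * l2_norm_sq p \<le> (\<Sum>k=1..L n. (cmod (p (X n k)))\<^sup>2 * \<tau> n k) \<and>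
        (\<Sum>k=1..L n. (cmod (p (X n k)))\<^sup>2 * \<tau> n k) \<le> B * l2_norm_sq p)"

end

theory Submission
  imports Defs
begin

text \<open>The discrete least squares approximation \<open>p\<^sub>n\<close> is the orthogonal projection of \<open>f\<close> onto
  \<open>\<T>\<^sub>n\<close> for the weighted discrete inner product \<open>\<langle>g, h\<rangle>\<^sub>\<tau> = \<Sum>\<^sub>k g(x\<^sub>n\<^sub>,\<^sub>k) cnj(h(x\<^sub>n\<^sub>,\<^sub>k)) \<tau>\<^sub>n\<^sub>,\<^sub>k\<close>.
  Since \<open>P\<^sub>nf - p\<^sub>n \<in> \<T>\<^sub>n\<close>, Pythagoras gives \<open>\<parallel>P\<^sub>nf - p\<^sub>n\<parallel>\<^sub>\<tau>\<^sup>2 \<le> \<parallel>f - P\<^sub>nf\<parallel>\<^sub>\<tau>\<^sup>2\<close>, and the lower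
  Marcinkiewicz-Zygmund inequality turns the left-hand side into \<open>A \<parallel>P\<^sub>nf - p\<^sub>n\<parallel>\<^sub>2\<^sup>2\<close>. This yields the
  constant \<open>1/A\<close>, which is at most \<open>B/A\<^sup>2\<close> because testing the MZ inequalities on the constant
  polynomial 1 shows \<open>A \<le> B\<close>. Only the values of \<open>f\<close> at the nodes enter, so its continuity
  and periodicity are not needed.\<close>

lemma trig_poly_diff:
  assumes "trig_poly n p" "trig_poly n q"
  shows "trig_poly n (\<lambda>x. p x - q x)"
proof -
  obtain c where c: "p = (\<lambda>x. \<Sum>k\<in>{-int n..int n}. c k * exp (2 * of_real pi * \<i> * of_int k * of_real x))"
    using assms(1) unfolding trig_poly_def by blast
  obtain e where e: "q = (\<lambda>x. \<Sum>k\<in>{-int n..int n}. e k * exp (2 * of_real pi * \<i> * of_int k * of_real x))"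
    using assms(2) unfolding trig_poly_def by blast
  show ?thesis unfolding trig_poly_def
    by (intro exI[of _ "\<lambda>k. c k - e k"]) (simp add: c e fun_eq_iff left_diff_distrib sum_subtractf)
qed

lemma trig_poly_add_cmult:
  assumes "trig_poly n p" "trig_poly n q"
  shows "trig_poly n (\<lambda>x. p x + a * q x)"
proof -
  obtain c where c: "p = (\<lambda>x. \<Sum>k\<in>{-int n..int n}. c k * exp (2 * of_real pi * \<i> * of_int k * of_real x))"
    using assms(1) unfolding trig_poly_def by blast
  obtain e where e: "q = (\<lambda>x. \<Sum>k\<in>{-int n..int n}. e k * exp (2 * of_real pi * \<i> * of_int k * of_real x))"
    using assms(2) unfolding trig_poly_def by blast
  show ?thesis unfolding trig_poly_def
    by (intro exI[of _ "\<lambda>k. c k + a * e k"])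
       (simp add: c e fun_eq_iff distrib_right sum.distrib sum_distrib_left mult.assoc)
qed

lemma trig_poly_fourier_proj: "trig_poly n (fourier_proj n f)"
  unfolding trig_poly_def fourier_proj_def by blast

lemma trig_poly_one: "trig_poly n (\<lambda>x. 1)"
proof -
  have "(\<Sum>k\<in>{-int n..int n}. (if k = 0 then 1 else 0) * exp (2 * of_real pi * \<i> * of_int k * of_real x))
      = (1::complex)" for x
  proof -
    have "(\<Sum>k\<in>{-int n..int n}. (if k = 0 then 1 else 0) * exp (2 * of_real pi * \<i> * of_int k * of_real x))
       = (\<Sum>k\<in>{-int n..int n}. (if k = 0 then exp (2 * of_real pi * \<i> * of_int k * of_real x) else 0))"
      by (intro sum.cong) auto
    then show ?thesis by simp
  qed
  then show ?thesis unfolding trig_poly_def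
    by (intro exI[of _ "\<lambda>k. if k = 0 then 1 else 0"]) (simp add: fun_eq_iff)
qed

lemma l2_norm_sq_one: "l2_norm_sq (\<lambda>x. 1) = 1"
  unfolding l2_norm_sq_def by simp

lemma MZ_family_weights_pos:
  assumes "MZ_family X \<tau> L A B" "n \<ge> 1" "k \<in> {1..L n}"
  shows "\<tau> n k > 0"
  using assms unfolding MZ_family_def by blast

lemma MZ_family_lower:
  assumes "MZ_family X \<tau> L A B" "n \<ge> 1" "trig_poly n p"
  shows "A * l2_norm_sq p \<le> (\<Sum>k=1..L n. (cmod (p (X n k)))\<^sup>2 * \<tau> n k)"
  using assms unfolding MZ_family_def by blast

lemma MZ_family_constants_le:
  assumes "MZ_family X \<tau> L A B"
  shows "A \<le> B"
proof -
  have "A * l2_norm_sq (\<lambda>x. 1) \<le> (\<Sum>k=1..L 1. (cmod 1)\<^sup>2 * \<tau> 1 k)"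
    "(\<Sum>k=1..L 1. (cmod 1)\<^sup>2 * \<tau> 1 k) \<le> B * l2_norm_sq (\<lambda>x. 1)"
    using assms trig_poly_one[of 1] unfolding MZ_family_def by (blast, blast)
  then show ?thesis by (simp add: l2_norm_sq_one)
qed

lemma quadratic_nonneg_imp_linear_coeff_zero:
  fixes a b :: real
  assumes "\<And>t. 0 \<le> t\<^sup>2 * b - 2 * t * a"
  shows "a = 0"
proof -
  define c where "c = \<bar>b\<bar> + 1"
  have c: "c > 0" "b < 2 * c" unfolding c_def by auto
  have "0 \<le> (a / c)\<^sup>2 * b - 2 * (a / c) * a" by (rule assms)
  then have "0 \<le> a\<^sup>2 * (b - 2 * c)"
    using c by (simp add: field_simps power2_eq_square)
  then have "a\<^sup>2 \<le> 0"
    using c by (simp add: zero_le_mult_iff)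
  then show ?thesis by simp
qed

lemma weighted_sq_sum_expand:
  fixes r d :: "'i \<Rightarrow> complex" and w :: "'i \<Rightarrow> real" and t :: real
  shows "(\<Sum>k\<in>K. (cmod (r k - t * d k))\<^sup>2 * w k)
       = (\<Sum>k\<in>K. (cmod (r k))\<^sup>2 * w k) - 2 * t * (\<Sum>k\<in>K. Re (r k * cnj (d k)) * w k)
         + t\<^sup>2 * (\<Sum>k\<in>K. (cmod (d k))\<^sup>2 * w k)"
proof -
  have "(cmod (r k - t * d k))\<^sup>2 = (cmod (r k))\<^sup>2 - 2 * t * Re (r k * cnj (d k)) + t\<^sup>2 * (cmod (d k))\<^sup>2"
    for k
    unfolding cmod_power2 by (simp add: power2_eq_square algebra_simps)
  then have "(\<Sum>k\<in>K. (cmod (r k - t * d k))\<^sup>2 * w k)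
      = (\<Sum>k\<in>K. ((cmod (r k))\<^sup>2 - 2 * t * Re (r k * cnj (d k)) + t\<^sup>2 * (cmod (d k))\<^sup>2) * w k)"
    by (intro sum.cong) simp_all
  also have "\<dots> = (\<Sum>k\<in>K. (cmod (r k))\<^sup>2 * w k) - 2 * t * (\<Sum>k\<in>K. Re (r k * cnj (d k)) * w k)
         + t\<^sup>2 * (\<Sum>k\<in>K. (cmod (d k))\<^sup>2 * w k)"
    by (simp add: left_diff_distrib distrib_right distrib_left sum.distrib sum_subtractf sum_distrib_left mult.assoc)
  finally show ?thesis .
qed

lemma weighted_least_squares_pythagoras:
  fixes r d :: "'i \<Rightarrow> complex" and w :: "'i \<Rightarrow> real"
  assumes "\<And>t::real. (\<Sum>k\<in>K. (cmod (r k))\<^sup>2 * w k) \<le> (\<Sum>k\<in>K. (cmod (r k - t * d k))\<^sup>2 * w k)"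
  shows "(\<Sum>k\<in>K. (cmod (r k - d k))\<^sup>2 * w k)
       = (\<Sum>k\<in>K. (cmod (r k))\<^sup>2 * w k) + (\<Sum>k\<in>K. (cmod (d k))\<^sup>2 * w k)"
proof -
  have "(\<Sum>k\<in>K. Re (r k * cnj (d k)) * w k) = 0"
    using assms by (intro quadratic_nonneg_imp_linear_coeff_zero) (simp add: weighted_sq_sum_expand)
  then show ?thesis
    using weighted_sq_sum_expand[of r 1 d w K] by simp
qed

theorem proposition2p5:
  fixes X \<tau> :: "nat \<Rightarrow> nat \<Rightarrow> real" and L :: "nat \<Rightarrow> nat" and A B :: real
    and f pn :: "real \<Rightarrow> complex" and n :: nat
  assumes MZ: "MZ_family X \<tau> L A B"
    and f_cont: "continuous_on UNIV f"
    and f_per: "\<forall>x. f (x + 1) = f x"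
    and n: "n \<ge> 1"
    and pn_poly: "trig_poly n pn"
    and pn_min: "\<forall>p. trig_poly n p \<longrightarrow>
        (\<Sum>k=1..L n. (cmod (f (X n k) - pn (X n k)))\<^sup>2 * \<tau> n k)
          \<le> (\<Sum>k=1..L n. (cmod (f (X n k) - p (X n k)))\<^sup>2 * \<tau> n k)"
  shows "l2_norm_sq (\<lambda>x. fourier_proj n f x - pn x)
     \<le> B / A\<^sup>2 * (\<Sum>k=1..L n. (cmod (f (X n k) - fourier_proj n f (X n k)))\<^sup>2 * \<tau> n k)"
proof -
  define q where "q = fourier_proj n f"
  define S where "S = (\<Sum>k=1..L n. (cmod (f (X n k) - q (X n k)))\<^sup>2 * \<tau> n k)"
  have A: "A > 0" using MZ unfolding MZ_family_def by simp
  have d_poly: "trig_poly n (\<lambda>x. q x - pn x)"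
    unfolding q_def by (intro trig_poly_diff trig_poly_fourier_proj pn_poly)
  have "(\<Sum>k=1..L n. (cmod (f (X n k) - pn (X n k)))\<^sup>2 * \<tau> n k)
      \<le> (\<Sum>k=1..L n. (cmod (f (X n k) - pn (X n k) - t * (q (X n k) - pn (X n k))))\<^sup>2 * \<tau> n k)" for t :: real
  proof -
    have "trig_poly n (\<lambda>x. pn x + t * (q x - pn x))"
      by (rule trig_poly_add_cmult[OF pn_poly d_poly])
    from pn_min[rule_format, OF this] show ?thesis by (simp add: diff_diff_eq)
  qed
  then have pythagoras: "S = (\<Sum>k=1..L n. (cmod (f (X n k) - pn (X n k)))\<^sup>2 * \<tau> n k)
      + (\<Sum>k=1..L n. (cmod (q (X n k) - pn (X n k)))\<^sup>2 * \<tau> n k)"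
    unfolding S_def by (subst weighted_least_squares_pythagoras[symmetric]) simp_all
  have weighted_nonneg: "0 \<le> (\<Sum>k=1..L n. (cmod (g k))\<^sup>2 * \<tau> n k)" for g :: "nat \<Rightarrow> complex"
    using MZ_family_weights_pos[OF MZ n] by (intro sum_nonneg) (simp add: less_imp_le)
  have S_nonneg: "0 \<le> S"
    unfolding S_def by (rule weighted_nonneg)
  have "A * l2_norm_sq (\<lambda>x. q x - pn x) \<le> S"
    using MZ_family_lower[OF MZ n d_poly] pythagoras weighted_nonneg[of "\<lambda>k. f (X n k) - pn (X n k)"]
    by simp
  then have "l2_norm_sq (\<lambda>x. q x - pn x) \<le> A / A\<^sup>2 * S"
    using A by (simp add: field_simps power2_eq_square)
  also have "\<dots> \<le> B / A\<^sup>2 * S"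
    using MZ_family_constants_le[OF MZ] S_nonneg by (intro mult_right_mono divide_right_mono) auto
  finally show ?thesis unfolding S_def q_def .
qed

end
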